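(* Let $G$ be a $2$-Engel group, i.e. $[x,y,y]=1$ for all $x,y\in G$. If the set $\{x\in G:x^3=1\}$ is $2$-large in $G$, then $G$ has exponent $3$.
   Context: $[x,y]=x^{-1}y^{-1}xy$ and $[x,y,z]=[[x,y],z]$. A subset $X\subseteq G$ is $2$-large in $G$ if $aX\cap bX\ne\emptyset$ for all $a,b\in G$. *)

theory Defs
  imports "HOL-Algebra.Group"
begin

definition comm :: "('a, 'b) monoid_scheme \<Rightarrow> 'a \<Rightarrow> 'a \<Rightarrow> 'a" where
  "comm G x y = inv\<^bsub>G\<^esub> x \<otimes>\<^bsub>G\<^esub> inv\<^bsub>G\<^esub> y \<otimes>\<^bsub>G\<^esub> x \<otimes>\<^bsub>G\<^esub> y"

definition comm3 :: "('a, 'b) monoid_scheme \<Rightarrow> 'a \<Rightarrow> 'a \<Rightarrow> 'a \<Rightarrow> 'a" where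
  "comm3 G x y z = comm G (comm G x y) z"

definition two_engel :: "('a, 'b) monoid_scheme \<Rightarrow> bool" where
  "two_engel G \<longleftrightarrow> (\<forall>x\<in>carrier G. \<forall>y\<in>carrier G. comm3 G x y y = \<one>\<^bsub>G\<^esub>)"

definition two_large :: "('a, 'b) monoid_scheme \<Rightarrow> 'a set \<Rightarrow> bool" where
  "two_large G X \<longleftrightarrow> (\<forall>a\<in>carrier G. \<forall>b\<in>carrier G. ((\<lambda>x. a \<otimes>\<^bsub>G\<^esub> x) ` X) \<inter> ((\<lambda>x. b \<otimes>\<^bsub>G\<^esub> x) ` X) \<noteq> {})"

end

theory Submission
  imports Defs
begin

(* Since X = {x. x^3 = 1} is 2-large, every g lies in X X^-1, so g = y a with y^3 = a^3 = 1.
   In a 2-Engel group every commutator [a,y] commutes with a and y, hence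
   (y a)^3 = y^3 a^3 [a,y]^3 and [a,y]^3 = [a^3,y] = 1. *)

context group
begin

lemma m_inv_cancel_left [simp]: "x \<in> carrier G \<Longrightarrow> z \<in> carrier G \<Longrightarrow> x \<otimes> (inv x \<otimes> z) = z"
  by (simp add: m_assoc[symmetric])

lemma inv_m_cancel_left [simp]: "x \<in> carrier G \<Longrightarrow> z \<in> carrier G \<Longrightarrow> inv x \<otimes> (x \<otimes> z) = z"
  by (simp add: m_assoc[symmetric])

lemma comm_closed [simp]: "x \<in> carrier G \<Longrightarrow> y \<in> carrier G \<Longrightarrow> comm G x y \<in> carrier G"
  by (simp add: comm_def)

lemma inv_comm_eq_comm_swap:
  "x \<in> carrier G \<Longrightarrow> y \<in> carrier G \<Longrightarrow> inv (comm G x y) = comm G y x"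
  by (simp add: comm_def inv_mult_group m_assoc)

lemma comm_eq_one_iff_commute:
  assumes "x \<in> carrier G" "y \<in> carrier G"
  shows "comm G x y = \<one> \<longleftrightarrow> x \<otimes> y = y \<otimes> x"
proof -
  have "comm G x y = inv (y \<otimes> x) \<otimes> (x \<otimes> y)"
    using assms by (simp add: comm_def inv_mult_group m_assoc)
  with assms show ?thesis
    by (metis inv_closed inv_inv m_closed inv_comm inv_equality r_inv)
qed

lemma commute_inv:
  assumes "x \<in> carrier G" "c \<in> carrier G" "c \<otimes> x = x \<otimes> c"
  shows "inv c \<otimes> x = x \<otimes> inv c"
proof -
  have "inv c \<otimes> (c \<otimes> x) \<otimes> inv c = inv c \<otimes> (x \<otimes> c) \<otimes> inv c"
    using assms(3) by simp
  with assms(1,2) show ?thesis by (simp add: m_assoc)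
qed

lemma comm_mult_left:
  assumes "x \<in> carrier G" "y \<in> carrier G" "z \<in> carrier G"
  shows "comm G (x \<otimes> z) y = inv z \<otimes> comm G x y \<otimes> z \<otimes> comm G z y"
  using assms by (simp add: comm_def inv_mult_group m_assoc)

lemma comm_pow_left:
  assumes "x \<in> carrier G" "y \<in> carrier G" "comm G x y \<otimes> x = x \<otimes> comm G x y"
  shows "comm G (x [^] n) y = comm G x y [^] (n::nat)"
proof (induction n)
  case 0
  then show ?case using assms(2) by (simp add: comm_def)
next
  case (Suc n)
  have "comm G x y [^] n \<otimes> x = x \<otimes> comm G x y [^] n"
    using assms by (simp add: group_commutes_pow)
  then have "inv x \<otimes> comm G x y [^] n \<otimes> x = comm G x y [^] n"
    using assms(1,2) by (simp add: m_assoc)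
  then show ?case
    using assms(1,2) Suc.IH by (simp add: comm_mult_left)
qed

lemma cube_mult_of_central_comm:
  assumes x: "x \<in> carrier G" and y: "y \<in> carrier G" and c: "c \<in> carrier G"
    and yx: "y \<otimes> x = x \<otimes> y \<otimes> c"
    and cx: "c \<otimes> x = x \<otimes> c" and cy: "c \<otimes> y = y \<otimes> c"
  shows "(x \<otimes> y) [^] (3::nat) = x [^] (3::nat) \<otimes> y [^] (3::nat) \<otimes> c [^] (3::nat)"
proof -
  \<comment> \<open>Oriented as rewrite rules these sort any product of x, y, c into the order x, y, c.\<close>
  have "y \<otimes> (x \<otimes> z) = x \<otimes> (y \<otimes> (c \<otimes> z))"
    and "c \<otimes> (x \<otimes> z) = x \<otimes> (c \<otimes> z)" and "c \<otimes> (y \<otimes> z) = y \<otimes> (c \<otimes> z)"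
    if "z \<in> carrier G" for z
    using x y c yx cx cy that by (simp_all add: m_assoc[symmetric])
  with x y c cx cy show ?thesis
    by (simp add: numeral_3_eq_3 m_assoc)
qed

lemma two_engel_comm_commute_right:
  assumes "two_engel G" "x \<in> carrier G" "y \<in> carrier G"
  shows "comm G x y \<otimes> y = y \<otimes> comm G x y"
  using assms comm_eq_one_iff_commute[of "comm G x y" y]
  by (simp add: two_engel_def comm3_def)

lemma two_engel_comm_commute_left:
  assumes "two_engel G" "x \<in> carrier G" "y \<in> carrier G"
  shows "comm G x y \<otimes> x = x \<otimes> comm G x y"
  using commute_inv[OF assms(2) _ two_engel_comm_commute_right[OF assms(1,3,2)]] assms(2,3)
  by (simp add: inv_comm_eq_comm_swap)

lemma two_engel_cube_mult_eq_one:
  assumes "two_engel G" "x \<in> carrier G" "y \<in> carrier G"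
    and "x [^] (3::nat) = \<one>" "y [^] (3::nat) = \<one>"
  shows "(x \<otimes> y) [^] (3::nat) = \<one>"
proof -
  have "(x \<otimes> y) [^] (3::nat) = x [^] (3::nat) \<otimes> y [^] (3::nat) \<otimes> comm G y x [^] (3::nat)"
  proof (rule cube_mult_of_central_comm)
    show "y \<otimes> x = x \<otimes> y \<otimes> comm G y x"
      using assms(2,3) by (simp add: comm_def m_assoc)
  qed (use assms(1-3) two_engel_comm_commute_left two_engel_comm_commute_right in auto)
  also have "\<dots> = comm G y x [^] (3::nat)"
    using assms(2-5) by simp
  also have "\<dots> = comm G (y [^] (3::nat)) x"
    using assms(1-3) by (intro comm_pow_left[symmetric] two_engel_comm_commute_left)
  also have "\<dots> = \<one>"
    using assms(2,5) by (simp add: comm_def)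
  finally show ?thesis .
qed

lemma two_large_mult_inv:
  assumes "two_large G X" "X \<subseteq> carrier G" "g \<in> carrier G"
  obtains x y where "x \<in> X" "y \<in> X" "g = y \<otimes> inv x"
proof -
  have "(\<lambda>x. g \<otimes> x) ` X \<inter> (\<lambda>y. \<one> \<otimes> y) ` X \<noteq> {}"
    using assms(1,3) unfolding two_large_def by blast
  then obtain x y where "x \<in> X" "y \<in> X" "g \<otimes> x = \<one> \<otimes> y"
    by blast
  with assms(2,3) show ?thesis
    using that by (metis inv_solve_right l_one subsetD)
qed

end

theorem theorem4p4:
  fixes G (structure)
  assumes "group G"
    and "two_engel G"
    and "two_large G {x \<in> carrier G. x [^] (3::nat) = \<one>}"
  shows "\<forall>x\<in>carrier G. x [^] (3::nat) = \<one>"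
proof
  interpret group G by (rule assms(1))
  fix g assume "g \<in> carrier G"
  then obtain x y where x: "x \<in> carrier G" "x [^] (3::nat) = \<one>"
    and y: "y \<in> carrier G" "y [^] (3::nat) = \<one>" and g: "g = y \<otimes> inv x"
    using two_large_mult_inv[OF assms(3)] by blast
  have "inv x [^] (3::nat) = \<one>"
    using x by (simp add: nat_pow_inv)
  then show "g [^] (3::nat) = \<one>"
    using two_engel_cube_mult_eq_one[OF assms(2)] x y g by simp
qed

end
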